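(* Let $H<G$ and $H'<G'$ be countable abelian groups such that all elements of $G/H$ and of $G'/H'$ have odd order, and suppose $r:H\to H'$ is an isomorphism. Let $\|\cdot\|_H$ be a proper norm on $H$ and $\|\cdot\|_{H'}=\|r^{-1}(\cdot)\|_H$ the induced norm on $H'$. Suppose there are one-step ascending chains $\mathcal L=\{G_0<G_1<\cdots\}$ and $\mathcal L'=\{G'_0<G'_1<\cdots\}$ associated to $H$ and $H'$ respectively with equal sequences of indexes. Let $d_G$ and $d_{G'}$ be the pseudo-ultrametrics generated by $(\|\cdot\|_H,\mathcal L)$ and $(\|\cdot\|_{H'},\mathcal L')$ (with any admissible sequences $\{K_n\}$, $\{K'_n\}$). Then $(G,d_G)$ and $(G',d_{G'})$ are coarsely equivalent, and the coarse equivalence can be chosen to be bijective.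
   Context: Proper norm: $\|g\|=0$ iff $g=0$, $\|-g\|=\|g\|$, subadditive, finite balls. One-step ascending chain of a countable locally finite group $Q$: $\{0\}=Q_0<Q_1<\cdots$, $\bigcup Q_i=Q$, with $q_i$ such that $Q_i=\langle q_1,\dots,q_i\rangle$ and $q_{i+1}\notin Q_i$; the chain associated to $H$ is $G_i=\pi^{-1}(Q_i)$ ($\pi:G\to G/H$), with generators $g_i\in\pi^{-1}(q_i)$ and indexes $m_i=[G_i:G_{i-1}]=2k_i+1$. Every $g\in G$ has a unique representation $g=h_g+\sum r_ig_i$ with $h_g\in H$, $r_i\in[-k_i,k_i]\cap\mathbb Z$, almost all zero. Given positive $K_n$ strictly increasing to $\infty$ with $K_n\ge\sum_{i=1}^n(n-i+1)\|h_{m_ig_i}\|_H$ (admissible), the pseudo-ultrametric generated is $d_G(x,y)=\|y-x\|_G$ where $\|g\|_G=\|h_g\|_H+\|\pi(\sum r_ig_i)\|_{G/H}$ and $\|x\|_{G/H}=K_i$ for $x\in Q_i\setminus Q_{i-1}$, $\|0\|_{G/H}=0$. A coarse equivalence is a map $f$ such that for each $\delta$ there is $\epsilon$ with $d(x,y)\le\delta\Rightarrow d(f x,f y)\le\epsilon$, with a map $g$ of the same kind such that $fg$, $gf$ are at bounded distance from the identities. *)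

theory Defs
  imports Complex_Main "HOL-Library.Countable"
begin

definition is_subgroup :: "'g::ab_group_add set \<Rightarrow> bool" where
  "is_subgroup A \<longleftrightarrow> 0 \<in> A \<and> (\<forall>x\<in>A. \<forall>y\<in>A. x + y \<in> A) \<and> (\<forall>x\<in>A. - x \<in> A)"

definition gen_subgroup :: "'g::ab_group_add set \<Rightarrow> 'g set" where
  "gen_subgroup S = \<Inter>{A. is_subgroup A \<and> S \<subseteq> A}"

fun nmul :: "nat \<Rightarrow> 'g::ab_group_add \<Rightarrow> 'g" where
  "nmul 0 g = 0"
| "nmul (Suc n) g = g + nmul n g"

definition zmul :: "int \<Rightarrow> 'g::ab_group_add \<Rightarrow> 'g" where
  "zmul k g = (if k \<ge> 0 then nmul (nat k) g else - nmul (nat (- k)) g)"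

definition coset_order :: "'g::ab_group_add set \<Rightarrow> 'g \<Rightarrow> nat" where
  "coset_order H g = (if \<exists>n>0. nmul n g \<in> H then (LEAST n. n > 0 \<and> nmul n g \<in> H) else 0)"

definition quotient_odd_orders :: "'g::ab_group_add set \<Rightarrow> bool" where
  "quotient_odd_orders H \<longleftrightarrow> (\<forall>g. coset_order H g > 0 \<and> odd (coset_order H g))"

definition group_iso_on :: "('g::ab_group_add \<Rightarrow> 'h::ab_group_add) \<Rightarrow> 'g set \<Rightarrow> 'h set \<Rightarrow> bool" where
  "group_iso_on r H H' \<longleftrightarrow> bij_betw r H H' \<and> (\<forall>x\<in>H. \<forall>y\<in>H. r (x + y) = r x + r y)"

text \<open>Proper norm on the subgroup H (only values on H matter).\<close>
definition proper_norm_on :: "'g::ab_group_add set \<Rightarrow> ('g \<Rightarrow> real) \<Rightarrow> bool" where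
  "proper_norm_on H n \<longleftrightarrow>
     (\<forall>g\<in>H. n g = 0 \<longleftrightarrow> g = 0) \<and>
     (\<forall>g\<in>H. n (- g) = n g) \<and>
     (\<forall>g\<in>H. \<forall>h\<in>H. n (g + h) \<le> n g + n h) \<and>
     (\<forall>R. finite {g\<in>H. n g \<le> R})"

text \<open>G_i = preimage of Q_i = <q_1,...,q_i> under G -> G/H, i.e. the subgroup generated
  by H and g_1,...,g_i (generators g_i indexed from 1).\<close>
definition chainG :: "'g::ab_group_add set \<Rightarrow> (nat \<Rightarrow> 'g) \<Rightarrow> nat \<Rightarrow> 'g set" where
  "chainG H gen i = gen_subgroup (H \<union> gen ` {1..i})"

definition one_step_chain :: "'g::ab_group_add set \<Rightarrow> (nat \<Rightarrow> 'g) \<Rightarrow> bool" where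
  "one_step_chain H gen \<longleftrightarrow>
     is_subgroup H \<and>
     (\<forall>i. gen (Suc i) \<notin> chainG H gen i) \<and>
     (\<Union>i. chainG H gen i) = UNIV"

text \<open>Index m_i = [G_i : G_{i-1}] and k_i with m_i = 2 k_i + 1.\<close>
definition chain_index :: "'g::ab_group_add set \<Rightarrow> (nat \<Rightarrow> 'g) \<Rightarrow> nat \<Rightarrow> nat" where
  "chain_index H gen i =
     card ((\<lambda>x. (\<lambda>y. x + y) ` chainG H gen (i - 1)) ` chainG H gen i)"

definition chain_k :: "'g::ab_group_add set \<Rightarrow> (nat \<Rightarrow> 'g) \<Rightarrow> nat \<Rightarrow> int" where
  "chain_k H gen i = (int (chain_index H gen i) - 1) div 2"

definition rep_ok :: "'g::ab_group_add set \<Rightarrow> (nat \<Rightarrow> 'g) \<Rightarrow> 'g \<Rightarrow> 'g \<Rightarrow> (nat \<Rightarrow> int) \<Rightarrow> bool" where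
  "rep_ok H gen g h r \<longleftrightarrow>
     h \<in> H \<and> finite {i. r i \<noteq> 0} \<and> r 0 = 0 \<and>
     (\<forall>i\<ge>1. \<bar>r i\<bar> \<le> chain_k H gen i) \<and>
     g = h + (\<Sum>i\<in>{i. r i \<noteq> 0}. zmul (r i) (gen i))"

definition hpart :: "'g::ab_group_add set \<Rightarrow> (nat \<Rightarrow> 'g) \<Rightarrow> 'g \<Rightarrow> 'g" where
  "hpart H gen g = (THE h. \<exists>r. rep_ok H gen g h r)"

definition rpart :: "'g::ab_group_add set \<Rightarrow> (nat \<Rightarrow> 'g) \<Rightarrow> 'g \<Rightarrow> nat \<Rightarrow> int" where
  "rpart H gen g = (THE r. \<exists>h. rep_ok H gen g h r)"

definition admissible :: "'g::ab_group_add set \<Rightarrow> (nat \<Rightarrow> 'g) \<Rightarrow> ('g \<Rightarrow> real) \<Rightarrow> (nat \<Rightarrow> real) \<Rightarrow> bool" where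
  "admissible H gen nH K \<longleftrightarrow>
     (\<forall>n\<ge>1. K n > 0) \<and>
     (\<forall>n\<ge>1. K n < K (Suc n)) \<and>
     filterlim K at_top sequentially \<and>
     (\<forall>n\<ge>1. K n \<ge> (\<Sum>i=1..n. real (n - i + 1) *
                nH (hpart H gen (nmul (chain_index H gen i) (gen i)))))"

text \<open>Norm on G/H pulled back to G: ||pi x|| = K_i if pi x in Q_i - Q_{i-1}, 0 if pi x = 0.\<close>
definition qnorm :: "'g::ab_group_add set \<Rightarrow> (nat \<Rightarrow> 'g) \<Rightarrow> (nat \<Rightarrow> real) \<Rightarrow> 'g \<Rightarrow> real" where
  "qnorm H gen K x = (if x \<in> H then 0 else K (LEAST i. x \<in> chainG H gen i))"

definition normG :: "'g::ab_group_add set \<Rightarrow> (nat \<Rightarrow> 'g) \<Rightarrow> ('g \<Rightarrow> real) \<Rightarrow> (nat \<Rightarrow> real) \<Rightarrow> 'g \<Rightarrow> real" where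
  "normG H gen nH K g =
     nH (hpart H gen g) +
     qnorm H gen K (\<Sum>i\<in>{i. rpart H gen g i \<noteq> 0}. zmul (rpart H gen g i) (gen i))"

definition distG :: "'g::ab_group_add set \<Rightarrow> (nat \<Rightarrow> 'g) \<Rightarrow> ('g \<Rightarrow> real) \<Rightarrow> (nat \<Rightarrow> real) \<Rightarrow> 'g \<Rightarrow> 'g \<Rightarrow> real" where
  "distG H gen nH K x y = normG H gen nH K (y - x)"

definition coarse_map :: "('a \<Rightarrow> 'a \<Rightarrow> real) \<Rightarrow> ('b \<Rightarrow> 'b \<Rightarrow> real) \<Rightarrow> ('a \<Rightarrow> 'b) \<Rightarrow> bool" where
  "coarse_map d d' f \<longleftrightarrow> (\<forall>\<delta>. \<exists>\<epsilon>. \<forall>x y. d x y \<le> \<delta> \<longrightarrow> d' (f x) (f y) \<le> \<epsilon>)"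

definition coarse_equivalence :: "('a \<Rightarrow> 'a \<Rightarrow> real) \<Rightarrow> ('b \<Rightarrow> 'b \<Rightarrow> real) \<Rightarrow> ('a \<Rightarrow> 'b) \<Rightarrow> bool" where
  "coarse_equivalence d d' f \<longleftrightarrow> coarse_map d d' f \<and>
     (\<exists>g. coarse_map d' d g \<and> (\<exists>C. \<forall>x. d (g (f x)) x \<le> C) \<and> (\<exists>C. \<forall>y. d' (f (g y)) y \<le> C))"

end

theory Submission
  imports Defs
begin

text \<open>Reducing modulo the odd indexes \<open>m\<^sub>i = 2k\<^sub>i + 1\<close> to balanced residues, every \<open>g \<in> G\<close> has a
  unique normal form \<open>g = h + \<Sum> r\<^sub>i g\<^sub>i\<close> with \<open>h \<in> H\<close> and \<open>|r\<^sub>i| \<le> k\<^sub>i\<close>. As the indexes of the two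
  chains agree, \<open>f (h + \<Sum> r\<^sub>i g\<^sub>i) = r h + \<Sum> r\<^sub>i g'\<^sub>i\<close> is a bijection \<open>G \<rightarrow> G'\<close>, and its inverse has the
  same form. It is coarse: since \<open>K\<^sub>n \<rightarrow> \<infinity>\<close>, a bound on \<open>\<parallel>y - x\<parallel>\<^sub>G\<close> confines \<open>y - x\<close> to a fixed level
  \<open>G\<^sub>N\<close>, so the digit differences of \<open>x\<close> and \<open>y\<close>, being at most \<open>2k\<^sub>i < m\<^sub>i\<close>, vanish above \<open>N\<close>. Hence
  \<open>y - x\<close> and \<open>f y - f x\<close> differ from \<open>h\<close> and \<open>r h\<close> (\<open>h\<close> the difference of the \<open>H\<close>-parts, whose norms
  agree) by one of finitely many pairs of digit sums.\<close>

lemma nmul_add: "nmul (m + n) g = nmul m g + nmul n g"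
  by (induct m) (simp_all add: add.assoc)

lemma zmul_of_nat [simp]: "zmul (int n) g = nmul n g"
  by (simp add: zmul_def)

lemma zmul_0 [simp]: "zmul 0 g = 0"
  by (simp add: zmul_def)

lemma zmul_1 [simp]: "zmul 1 g = g"
  by (simp add: zmul_def)

lemma zmul_diff_of_nat: "zmul (int p - int q) g = nmul p g - nmul q g"
proof (cases "q \<le> p")
  case True
  then obtain d where "p = q + d" using le_Suc_ex by blast
  then show ?thesis by (simp add: nmul_add)
next
  case False
  then obtain d where d: "q = p + d" "d > 0"
    by (metis add_diff_inverse_nat less_imp_le_nat not_le zero_less_diff)
  then have "int p - int q = - int d" by simp
  then show ?thesis using d by (simp add: zmul_def nmul_add)
qed

lemma zmul_eq_diff_nmul: "zmul a g = nmul (nat a) g - nmul (nat (- a)) g"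
proof -
  have "a = int (nat a) - int (nat (- a))" by simp
  then show ?thesis by (metis zmul_diff_of_nat)
qed

lemma zmul_add: "zmul (a + b) g = zmul a g + zmul b g"
proof -
  have "a + b = int (nat a + nat b) - int (nat (- a) + nat (- b))" by simp
  then have "zmul (a + b) g = nmul (nat a + nat b) g - nmul (nat (- a) + nat (- b)) g"
    by (metis zmul_diff_of_nat)
  then show ?thesis by (simp add: zmul_eq_diff_nmul[of a] zmul_eq_diff_nmul[of b] nmul_add algebra_simps)
qed

lemma zmul_uminus: "zmul (- a) g = - zmul a g"
  using zmul_add[of a "- a" g] by (simp add: eq_neg_iff_add_eq_0 add.commute)

lemma zmul_diff: "zmul (a - b) g = zmul a g - zmul b g"
  using zmul_add[of a "- b" g] by (simp add: zmul_uminus)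

lemma zmul_mult: "zmul (a * b) g = zmul a (zmul b g)"
proof -
  have nat_case: "zmul (int p * b) g = zmul (int p) (zmul b g)" for p
    by (induct p) (simp_all add: algebra_simps zmul_add)
  show ?thesis
  proof (cases "a \<ge> 0")
    case True
    then show ?thesis using nat_case[of "nat a"] by simp
  next
    case False
    then have "a = - int (nat (- a))" by simp
    then show ?thesis using nat_case[of "nat (- a)"] by (metis minus_mult_left zmul_uminus)
  qed
qed

lemma diff_digit_sums:
  "(a + (\<Sum>i\<in>I. zmul (p i) (u i))) - (b + (\<Sum>i\<in>I. zmul (q i) (u i)))
     = (a - b) + (\<Sum>i\<in>I. zmul (p i - q i) (u i))"
  by (simp add: add_diff_add zmul_diff sum_subtractf)

lemma is_subgroup_zero: "is_subgroup A \<Longrightarrow> 0 \<in> A"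
  by (simp add: is_subgroup_def)

lemma is_subgroup_add: "is_subgroup A \<Longrightarrow> x \<in> A \<Longrightarrow> y \<in> A \<Longrightarrow> x + y \<in> A"
  by (simp add: is_subgroup_def)

lemma is_subgroup_uminus: "is_subgroup A \<Longrightarrow> x \<in> A \<Longrightarrow> - x \<in> A"
  by (simp add: is_subgroup_def)

lemma is_subgroup_diff: "is_subgroup A \<Longrightarrow> x \<in> A \<Longrightarrow> y \<in> A \<Longrightarrow> x - y \<in> A"
  by (metis diff_conv_add_uminus is_subgroup_add is_subgroup_uminus)

lemma is_subgroup_nmul: "is_subgroup A \<Longrightarrow> x \<in> A \<Longrightarrow> nmul n x \<in> A"
  by (induct n) (simp_all add: is_subgroup_zero is_subgroup_add)

lemma is_subgroup_zmul: "is_subgroup A \<Longrightarrow> x \<in> A \<Longrightarrow> zmul k x \<in> A"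
  by (simp add: zmul_def is_subgroup_nmul is_subgroup_uminus)

lemma is_subgroup_sum: "is_subgroup A \<Longrightarrow> (\<And>i. i \<in> S \<Longrightarrow> f i \<in> A) \<Longrightarrow> sum f S \<in> A"
  by (induct S rule: infinite_finite_induct) (simp_all add: is_subgroup_zero is_subgroup_add)

lemma is_subgroup_gen_subgroup: "is_subgroup (gen_subgroup S)"
  unfolding gen_subgroup_def is_subgroup_def by auto

lemma subset_gen_subgroup: "S \<subseteq> gen_subgroup S"
  unfolding gen_subgroup_def by auto

lemma gen_subgroup_least: "is_subgroup A \<Longrightarrow> S \<subseteq> A \<Longrightarrow> gen_subgroup S \<subseteq> A"
  unfolding gen_subgroup_def by auto

lemma coset_eq_iff: "is_subgroup A \<Longrightarrow> (+) x ` A = (+) y ` A \<longleftrightarrow> x - y \<in> A"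
proof
  assume A: "is_subgroup A" and eq: "(+) x ` A = (+) y ` A"
  have "x \<in> (+) y ` A"
    unfolding eq[symmetric] using is_subgroup_zero[OF A] by (metis add.right_neutral image_eqI)
  then show "x - y \<in> A" by auto
next
  assume A: "is_subgroup A" and d: "x - y \<in> A"
  have "(+) u ` A \<subseteq> (+) v ` A" if "u - v \<in> A" for u v
  proof
    fix z assume "z \<in> (+) u ` A"
    then obtain a where "a \<in> A" "z = v + ((u - v) + a)" by auto
    then show "z \<in> (+) v ` A" using A that is_subgroup_add by blast
  qed
  moreover have "y - x \<in> A" using is_subgroup_uminus[OF A d] by simp
  ultimately show "(+) x ` A = (+) y ` A" using d by (meson equalityI)
qed

lemma coset_order_pos: "quotient_odd_orders H \<Longrightarrow> coset_order H g > 0"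
  by (simp add: quotient_odd_orders_def)

lemma nmul_coset_order_in: "quotient_odd_orders H \<Longrightarrow> nmul (coset_order H g) g \<in> H"
proof -
  assume "quotient_odd_orders H"
  then have ex: "\<exists>n>0. nmul n g \<in> H" by (metis coset_order_pos coset_order_def less_irrefl)
  then show ?thesis
    using LeastI_ex[of "\<lambda>n. n > 0 \<and> nmul n g \<in> H"] by (simp add: coset_order_def)
qed

subsection \<open>The ascending chain and its indexes\<close>

locale odd_chain =
  fixes H :: "'g::ab_group_add set" and gen :: "nat \<Rightarrow> 'g"
  assumes subgroup_H: "is_subgroup H"
    and odd_orders: "quotient_odd_orders H"
    and one_step: "one_step_chain H gen"
begin

abbreviation G :: "nat \<Rightarrow> 'g set" where "G i \<equiv> chainG H gen i"

lemma is_subgroup_G: "is_subgroup (G i)"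
  by (simp add: chainG_def is_subgroup_gen_subgroup)

lemma H_subset_G: "H \<subseteq> G i"
  using subset_gen_subgroup unfolding chainG_def by blast

lemma G_0: "G 0 = H"
  using gen_subgroup_least[OF subgroup_H, of H] H_subset_G[of 0] by (auto simp: chainG_def)

lemma gen_in_G: "1 \<le> i \<Longrightarrow> i \<le> j \<Longrightarrow> gen i \<in> G j"
  using subset_gen_subgroup unfolding chainG_def by fastforce

lemma G_mono: "i \<le> j \<Longrightarrow> G i \<subseteq> G j"
  unfolding chainG_def
  by (rule gen_subgroup_least[OF is_subgroup_gen_subgroup]) (use subset_gen_subgroup in fastforce)

lemma ex_G: "\<exists>i. x \<in> G i"
  using one_step by (auto simp: one_step_chain_def)

lemma sum_zmul_gen_in_G: "(\<Sum>i\<in>{1..N}. zmul (d i) (gen i)) \<in> G N"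
  by (rule is_subgroup_sum[OF is_subgroup_G]) (rule is_subgroup_zmul[OF is_subgroup_G gen_in_G], auto)

lemma G_SucE:
  assumes "x \<in> G (Suc i)"
  obtains a t where "a \<in> G i" "x = a + zmul t (gen (Suc i))"
proof -
  let ?g = "gen (Suc i)"
  define S where "S = {a + zmul t ?g | a t. a \<in> G i}"
  have "is_subgroup S" unfolding is_subgroup_def
  proof (intro conjI ballI)
    show "0 \<in> S" unfolding S_def using is_subgroup_zero[OF is_subgroup_G]
      by (intro CollectI exI[of _ 0] exI[of _ 0]) simp
    fix x y assume "x \<in> S" "y \<in> S"
    then obtain a t b s where "a \<in> G i" "b \<in> G i" "x = a + zmul t ?g" "y = b + zmul s ?g"
      unfolding S_def by auto
    then show "x + y \<in> S" unfolding S_def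
      by (intro CollectI exI[of _ "a + b"] exI[of _ "t + s"])
        (auto simp: zmul_add is_subgroup_add[OF is_subgroup_G] algebra_simps)
  next
    fix x assume "x \<in> S"
    then obtain a t where "a \<in> G i" "x = a + zmul t ?g" unfolding S_def by auto
    then show "- x \<in> S" unfolding S_def
      by (intro CollectI exI[of _ "- a"] exI[of _ "- t"]) (auto simp: zmul_uminus is_subgroup_uminus[OF is_subgroup_G])
  qed
  moreover have "H \<union> gen ` {1..Suc i} \<subseteq> S"
  proof
    fix x assume x: "x \<in> H \<union> gen ` {1..Suc i}"
    show "x \<in> S"
    proof (cases "x = ?g")
      case True
      then show ?thesis unfolding S_def using is_subgroup_zero[OF is_subgroup_G]
        by (intro CollectI exI[of _ 0] exI[of _ 1]) simp
    next
      case False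
      then have "x \<in> G i" using x H_subset_G gen_in_G by (auto simp: le_Suc_eq)
      then show ?thesis unfolding S_def by (intro CollectI exI[of _ x] exI[of _ 0]) simp
    qed
  qed
  ultimately have "G (Suc i) \<subseteq> S" unfolding chainG_def by (rule gen_subgroup_least)
  then show ?thesis using assms that unfolding S_def by blast
qed

definition step_order :: "nat \<Rightarrow> nat" where
  "step_order p = (LEAST n. n > 0 \<and> nmul n (gen (Suc p)) \<in> G p)"

lemma step_order:
  shows step_order_pos: "step_order p > 0"
    and nmul_step_order_in_G: "nmul (step_order p) (gen (Suc p)) \<in> G p"
    and nmul_less_step_order: "0 < n \<Longrightarrow> n < step_order p \<Longrightarrow> nmul n (gen (Suc p)) \<notin> G p"
proof -
  let ?P = "\<lambda>n. n > 0 \<and> nmul n (gen (Suc p)) \<in> G p"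
  have "?P (coset_order H (gen (Suc p)))"
    using coset_order_pos[OF odd_orders] nmul_coset_order_in[OF odd_orders] H_subset_G by blast
  then have "?P (step_order p)" unfolding step_order_def by (rule LeastI)
  then show "step_order p > 0" "nmul (step_order p) (gen (Suc p)) \<in> G p" by auto
  show "0 < n \<Longrightarrow> n < step_order p \<Longrightarrow> nmul n (gen (Suc p)) \<notin> G p"
    unfolding step_order_def using not_less_Least by blast
qed

lemma zmul_gen_in_G_iff: "zmul t (gen (Suc p)) \<in> G p \<longleftrightarrow> int (step_order p) dvd t"
proof
  let ?g = "gen (Suc p)" and ?m = "int (step_order p)"
  have multiple_in: "zmul (?m * q) ?g \<in> G p" for q
    using is_subgroup_zmul[OF is_subgroup_G nmul_step_order_in_G, of q]
    by (simp add: zmul_mult mult.commute)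
  show "zmul t ?g \<in> G p" if "?m dvd t"
    using that multiple_in by blast
  assume t: "zmul t ?g \<in> G p"
  define s where "s = t mod ?m"
  have s: "0 \<le> s" "s < ?m" using step_order_pos[of p] by (auto simp: s_def)
  have "zmul s ?g = zmul t ?g - zmul (?m * (t div ?m)) ?g"
    by (metis s_def minus_mult_div_eq_mod zmul_diff)
  then have "nmul (nat s) ?g \<in> G p"
    using s(1) t multiple_in is_subgroup_diff[OF is_subgroup_G] by (metis int_nat_eq zmul_of_nat)
  then have "s = 0" using s nmul_less_step_order[of "nat s" p] by fastforce
  then show "?m dvd t" by (simp add: s_def dvd_eq_mod_eq_0)
qed

lemma step_order_odd: "odd (step_order p)"
proof -
  let ?g = "gen (Suc p)"
  have "zmul (int (coset_order H ?g)) ?g \<in> G p"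
    using nmul_coset_order_in[OF odd_orders] H_subset_G by auto
  then have "int (step_order p) dvd int (coset_order H ?g)" using zmul_gen_in_G_iff by blast
  then have "step_order p dvd coset_order H ?g" by simp
  moreover have "odd (coset_order H ?g)" using odd_orders by (simp add: quotient_odd_orders_def)
  ultimately show ?thesis using dvd_trans by blast
qed

lemma chain_index_Suc: "chain_index H gen (Suc p) = step_order p"
proof -
  let ?g = "gen (Suc p)" and ?m = "step_order p"
  let ?coset = "\<lambda>j. (+) (nmul j ?g) ` G p"
  have cosets: "(\<lambda>x. (+) x ` G p) ` G (Suc p) = ?coset ` {0..<?m}"
  proof (intro equalityI subsetI)
    fix X assume "X \<in> (\<lambda>x. (+) x ` G p) ` G (Suc p)"
    then obtain x where x: "x \<in> G (Suc p)" "X = (+) x ` G p" by auto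
    obtain a t where at: "a \<in> G p" "x = a + zmul t ?g" using G_SucE[OF x(1)] by blast
    define j where "j = nat (t mod int ?m)"
    have j: "j < ?m" "int j = t mod int ?m"
      using step_order_pos[of p] by (auto simp: j_def nat_less_iff)
    have "zmul (t - t mod int ?m) ?g \<in> G p"
      by (simp add: zmul_gen_in_G_iff del: zmul_of_nat)
    then have "x - nmul j ?g \<in> G p"
      using at is_subgroup_add[OF is_subgroup_G] j(2) by (metis zmul_of_nat zmul_diff add_diff_eq)
    then have "X = ?coset j" using coset_eq_iff[OF is_subgroup_G] x by simp
    then show "X \<in> ?coset ` {0..<?m}" using j by auto
  next
    fix X assume "X \<in> ?coset ` {0..<?m}"
    then obtain j where "X = ?coset j" by auto
    moreover have "nmul j ?g \<in> G (Suc p)" using is_subgroup_nmul[OF is_subgroup_G gen_in_G] by simp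
    ultimately show "X \<in> (\<lambda>x. (+) x ` G p) ` G (Suc p)" by blast
  qed
  have "inj_on ?coset {0..<?m}"
  proof (rule inj_onI)
    fix i j assume ij: "i \<in> {0..<?m}" "j \<in> {0..<?m}" and "?coset i = ?coset j"
    then have "zmul (int i - int j) ?g \<in> G p"
      using coset_eq_iff[OF is_subgroup_G] by (simp add: zmul_diff_of_nat)
    then have "int ?m dvd int i - int j" using zmul_gen_in_G_iff by blast
    then show "i = j" using ij dvd_imp_le_int[of "int i - int j" "int ?m"] by force
  qed
  then show ?thesis using cosets by (simp add: chain_index_def card_image)
qed

lemma chain_k_Suc: "2 * chain_k H gen (Suc p) + 1 = int (step_order p)"
proof -
  obtain q where "step_order p = 2 * q + 1" using step_order_odd oddE by blast
  then show ?thesis unfolding chain_k_def chain_index_Suc by simp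
qed

lemma chain_k_nonneg: "1 \<le> i \<Longrightarrow> 0 \<le> chain_k H gen i"
  using chain_k_Suc[of "i - 1"] step_order_pos[of "i - 1"] by simp

end

subsection \<open>The normal form \<open>g = h + \<Sum> r\<^sub>i g\<^sub>i\<close>\<close>

lemma sum_zmul_support:
  fixes r :: "nat \<Rightarrow> int"
  shows "\<forall>i. r i \<noteq> 0 \<longrightarrow> i \<in> {1..P} \<Longrightarrow>
   (\<Sum>i\<in>{i. r i \<noteq> 0}. zmul (r i) (u i)) = (\<Sum>i\<in>{1..P}. zmul (r i) (u i))"
  by (rule sum.mono_neutral_left) auto

lemma finite_support_bounded:
  assumes "finite {i. (r :: nat \<Rightarrow> int) i \<noteq> 0}" and "r 0 = 0"
  shows "\<exists>P. \<forall>i. r i \<noteq> 0 \<longrightarrow> i \<in> {1..P}"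
proof -
  obtain P where "\<forall>i\<in>{i. r i \<noteq> 0}. i \<le> P" using assms(1) finite_nat_set_iff_bounded_le by blast
  then show ?thesis using assms(2) by (intro exI[of _ P]) (auto simp: Suc_le_eq intro: Nat.gr0I)
qed

context odd_chain
begin

lemma ex_bounded_digits:
  "x \<in> G n \<Longrightarrow> \<exists>h r. h \<in> H \<and> (\<forall>i. r i \<noteq> 0 \<longrightarrow> i \<in> {1..n}) \<and>
     (\<forall>i\<ge>1. \<bar>r i\<bar> \<le> chain_k H gen i) \<and> x = h + (\<Sum>i\<in>{1..n}. zmul (r i) (gen i))"
proof (induct n arbitrary: x)
  case 0
  then show ?case using G_0 chain_k_nonneg by (intro exI[of _ x] exI[of _ "\<lambda>_. 0"]) auto
next
  case (Suc n)
  let ?g = "gen (Suc n)" and ?m = "int (step_order n)" and ?k = "chain_k H gen (Suc n)"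
  obtain a t where at: "a \<in> G n" "x = a + zmul t ?g" using G_SucE[OF Suc.prems] by blast
  \<comment> \<open>reduce \<open>t\<close> modulo \<open>m = 2k + 1\<close> to the balanced residue \<open>\<rho> \<in> [-k, k]\<close>\<close>
  define s where "s = t mod ?m"
  define \<rho> where "\<rho> = (if s \<le> ?k then s else s - ?m)"
  have s: "0 \<le> s" "s < ?m" "?m dvd t - s"
    using step_order_pos[of n] by (auto simp: s_def mod_eq_dvd_iff[symmetric])
  have "?m dvd (t - s) + ?m" using s(3) by simp
  then have \<rho>: "\<bar>\<rho>\<bar> \<le> ?k" "?m dvd t - \<rho>"
    using s chain_k_Suc[of n] by (auto simp: \<rho>_def algebra_simps)
  define a' where "a' = a + zmul (t - \<rho>) ?g"
  have "a' \<in> G n" unfolding a'_def using at \<rho> zmul_gen_in_G_iff is_subgroup_add[OF is_subgroup_G] by blast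
  then obtain h r where hr: "h \<in> H" "\<forall>i. r i \<noteq> 0 \<longrightarrow> i \<in> {1..n}" "\<forall>i\<ge>1. \<bar>r i\<bar> \<le> chain_k H gen i"
    "a' = h + (\<Sum>i\<in>{1..n}. zmul (r i) (gen i))" using Suc.hyps by blast
  define r' where "r' = r(Suc n := \<rho>)"
  have "(\<Sum>i\<in>{1..n}. zmul (r' i) (gen i)) = (\<Sum>i\<in>{1..n}. zmul (r i) (gen i))"
    by (rule sum.cong) (auto simp: r'_def)
  then have "x = h + (\<Sum>i\<in>{1..Suc n}. zmul (r' i) (gen i))"
    using at(2) hr(4) by (simp add: a'_def r'_def zmul_diff algebra_simps)
  then show ?case using hr \<rho> by (intro exI[of _ h] exI[of _ r']) (auto simp: r'_def)
qed

lemma digits_vanish_above: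
  "a \<in> G M \<Longrightarrow> h \<in> H \<Longrightarrow> \<forall>i\<in>{1..P}. \<bar>d i\<bar> \<le> 2 * chain_k H gen i \<Longrightarrow>
   a = h + (\<Sum>i\<in>{1..P}. zmul (d i) (gen i)) \<Longrightarrow> M < i \<Longrightarrow> i \<le> P \<Longrightarrow> d i = 0"
proof (induct P arbitrary: i)
  case 0
  then show ?case by simp
next
  case (Suc P)
  show ?case
  proof (cases "Suc P \<le> M")
    case True
    then show ?thesis using Suc.prems by simp
  next
    case False
    let ?g = "gen (Suc P)" and ?rest = "\<Sum>i\<in>{1..P}. zmul (d i) (gen i)"
    have "a \<in> G P" "h \<in> G P" using Suc.prems(1,2) G_mono[of M P] H_subset_G False by auto
    moreover have "zmul (d (Suc P)) ?g = a - h - ?rest"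
      using Suc.prems(4) by (simp add: algebra_simps)
    ultimately have "zmul (d (Suc P)) ?g \<in> G P"
      using sum_zmul_gen_in_G is_subgroup_diff[OF is_subgroup_G] by metis
    then have "int (step_order P) dvd d (Suc P)" using zmul_gen_in_G_iff by blast
    moreover have "\<bar>d (Suc P)\<bar> \<le> 2 * chain_k H gen (Suc P)" using Suc.prems(3) by simp
    then have "\<bar>d (Suc P)\<bar> < int (step_order P)" using chain_k_Suc[of P] by linarith
    ultimately have top: "d (Suc P) = 0" using dvd_imp_le_int by force
    then have "a = h + ?rest" using Suc.prems(4) by simp
    then show ?thesis using Suc.hyps[of i] Suc.prems top by (cases "i = Suc P") auto
  qed
qed

lemma rep_unique:
  assumes A: "rep_ok H gen x h r" and B: "rep_ok H gen x h' r'"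
  shows "h = h' \<and> r = r'"
proof -
  have "finite {i. r i \<noteq> 0}" "r 0 = 0" "finite {i. r' i \<noteq> 0}" "r' 0 = 0"
    using A B by (simp_all add: rep_ok_def)
  then obtain P1 P2 where P1: "\<forall>i. r i \<noteq> 0 \<longrightarrow> i \<in> {1..P1}" and P2: "\<forall>i. r' i \<noteq> 0 \<longrightarrow> i \<in> {1..P2}"
    using finite_support_bounded by metis
  define P where "P = max P1 P2"
  have s1: "\<forall>i. r i \<noteq> 0 \<longrightarrow> i \<in> {1..P}" and s2: "\<forall>i. r' i \<noteq> 0 \<longrightarrow> i \<in> {1..P}"
    using P1 P2 by (auto simp: P_def)
  let ?S = "\<Sum>i\<in>{1..P}. zmul (r i) (gen i)" and ?S' = "\<Sum>i\<in>{1..P}. zmul (r' i) (gen i)"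
  have x1: "x = h + ?S" using A sum_zmul_support[OF s1] unfolding rep_ok_def by simp
  have x2: "x = h' + ?S'" using B sum_zmul_support[OF s2] unfolding rep_ok_def by simp
  have "0 = (h + ?S) - (h' + ?S')" using x1 x2 by simp
  then have z: "0 = (h - h') + (\<Sum>i\<in>{1..P}. zmul (r i - r' i) (gen i))"
    by (simp only: diff_digit_sums)
  have hH: "h - h' \<in> H" using A B is_subgroup_diff[OF subgroup_H] unfolding rep_ok_def by blast
  have bd: "\<forall>i\<in>{1..P}. \<bar>r i - r' i\<bar> \<le> 2 * chain_k H gen i"
  proof
    fix i assume "i \<in> {1..P}"
    then have "\<bar>r i\<bar> \<le> chain_k H gen i" "\<bar>r' i\<bar> \<le> chain_k H gen i"
      using A B unfolding rep_ok_def by auto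
    then show "\<bar>r i - r' i\<bar> \<le> 2 * chain_k H gen i" by linarith
  qed
  have "r i - r' i = 0" if "0 < i" "i \<le> P" for i
    using digits_vanish_above[where M = 0, OF _ hH bd z] that G_0 is_subgroup_zero[OF subgroup_H]
    by simp
  then have "r = r'"
  proof (intro ext)
    fix i show "r i = r' i"
      using \<open>\<And>i. 0 < i \<Longrightarrow> i \<le> P \<Longrightarrow> r i - r' i = 0\<close> s1 s2
      by (metis atLeastAtMost_iff Suc_le_eq eq_iff_diff_eq_0 One_nat_def)
  qed
  then show ?thesis using x1 x2 by simp
qed

lemma rep_exists: "\<exists>h r. rep_ok H gen x h r"
proof -
  obtain n where "x \<in> G n" using ex_G by blast
  then obtain h r where hr: "h \<in> H" "\<forall>i. r i \<noteq> 0 \<longrightarrow> i \<in> {1..n}" "\<forall>i\<ge>1. \<bar>r i\<bar> \<le> chain_k H gen i"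
    "x = h + (\<Sum>i\<in>{1..n}. zmul (r i) (gen i))" using ex_bounded_digits by blast
  have "{i. r i \<noteq> 0} \<subseteq> {1..n}" using hr(2) by blast
  then have "finite {i. r i \<noteq> 0}" using finite_subset by blast
  moreover have "r 0 = 0" using hr(2) by force
  ultimately have "rep_ok H gen x h r"
    using hr unfolding rep_ok_def by (simp add: sum_zmul_support[OF hr(2)])
  then show ?thesis by blast
qed

lemma rep_ok_parts: "rep_ok H gen x (hpart H gen x) (rpart H gen x)"
proof -
  obtain h r where hr: "rep_ok H gen x h r" using rep_exists by blast
  have "hpart H gen x = h" unfolding hpart_def
    by (rule the_equality) (use hr rep_unique in blast)+
  moreover have "rpart H gen x = r" unfolding rpart_def
    by (rule the_equality) (use hr rep_unique in blast)+
  ultimately show ?thesis using hr by simp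
qed

lemma rep_ok_iff: "rep_ok H gen x h r \<longleftrightarrow> h = hpart H gen x \<and> r = rpart H gen x"
  using rep_ok_parts rep_unique by blast

lemma hpart_in_H: "hpart H gen x \<in> H"
  using rep_ok_parts unfolding rep_ok_def by blast

lemma rpart_bounded: "i \<ge> 1 \<Longrightarrow> \<bar>rpart H gen x i\<bar> \<le> chain_k H gen i"
  using rep_ok_parts unfolding rep_ok_def by blast

lemma rpart_support_bounded: "\<exists>P. \<forall>i. rpart H gen x i \<noteq> 0 \<longrightarrow> i \<in> {1..P}"
  using rep_ok_parts[of x] by (intro finite_support_bounded) (simp_all add: rep_ok_def)

lemma hpart_plus_digits:
  "x = hpart H gen x + (\<Sum>i\<in>{i. rpart H gen x i \<noteq> 0}. zmul (rpart H gen x i) (gen i))"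
  using rep_ok_parts unfolding rep_ok_def by blast

lemma hpart_add:
  assumes "a \<in> H"
  shows "hpart H gen (a + c) = a + hpart H gen c"
proof -
  have "rep_ok H gen (a + c) (a + hpart H gen c) (rpart H gen c)"
    using rep_ok_parts[of c] assms is_subgroup_add[OF subgroup_H] unfolding rep_ok_def by (auto simp: add.assoc)
  then show ?thesis unfolding rep_ok_iff by simp
qed

lemma hpart_plus_digits_upto:
  "\<forall>i. rpart H gen x i \<noteq> 0 \<longrightarrow> i \<in> {1..P} \<Longrightarrow>
   x = hpart H gen x + (\<Sum>i\<in>{1..P}. zmul (rpart H gen x i) (gen i))"
  using hpart_plus_digits[of x] sum_zmul_support[of "rpart H gen x" P gen] by simp

subsection \<open>The norm \<open>\<parallel>\<cdot>\<parallel>\<^sub>G\<close>\<close>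

lemma normG_eq: "normG H gen nH K x = nH (hpart H gen x) + qnorm H gen K (x - hpart H gen x)"
  unfolding normG_def using hpart_plus_digits[of x] by (metis add_diff_cancel_left')

lemma least_level:
  assumes "x \<notin> H"
  shows "x \<in> G (LEAST i. x \<in> G i)" and "(LEAST i. x \<in> G i) \<ge> 1"
proof -
  obtain n where "x \<in> G n" using ex_G by blast
  then show "x \<in> G (LEAST i. x \<in> G i)" by (rule LeastI)
  then have "(LEAST i. x \<in> G i) \<noteq> 0" using assms G_0 by metis
  then show "(LEAST i. x \<in> G i) \<ge> 1" by simp
qed

lemma qnorm_nonneg: "\<forall>n\<ge>1. K n > 0 \<Longrightarrow> qnorm H gen K w \<ge> 0"
  unfolding qnorm_def using least_level[of w] by (auto intro: less_imp_le)

lemma qnorm_le_sum: "w \<in> G N \<Longrightarrow> qnorm H gen K w \<le> (\<Sum>n\<le>N. \<bar>K n\<bar>)"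
proof (cases "w \<in> H")
  case True
  then show ?thesis by (simp add: qnorm_def sum_nonneg)
next
  case False
  assume "w \<in> G N"
  then have "(LEAST i. w \<in> G i) \<le> N" by (rule Least_le)
  then have "\<bar>K (LEAST i. w \<in> G i)\<bar> \<le> (\<Sum>n\<le>N. \<bar>K n\<bar>)" by (intro member_le_sum) auto
  then show ?thesis using False by (simp add: qnorm_def)
qed

lemma qnorm_le_imp_in_G:
  assumes "\<forall>n\<ge>N. \<delta> < K n" and "qnorm H gen K w \<le> \<delta>"
  shows "w \<in> G N"
proof (cases "w \<in> H")
  case True
  then show ?thesis using H_subset_G by blast
next
  case False
  then have "K (LEAST i. w \<in> G i) \<le> \<delta>" using assms(2) by (simp add: qnorm_def)
  then have "\<not> \<delta> < K (LEAST i. w \<in> G i)" by simp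
  then have "(LEAST i. w \<in> G i) \<le> N" using assms(1) nat_le_linear by blast
  then show ?thesis using least_level(1)[OF False] G_mono by blast
qed

lemma normG_ball_in_G:
  assumes K_pos: "\<forall>n\<ge>1. K n > 0" and K_lim: "filterlim K at_top sequentially"
    and nonneg: "\<forall>z\<in>H. nH z \<ge> 0"
  obtains N where "\<And>x. normG H gen nH K x \<le> \<delta> \<Longrightarrow> x \<in> G N"
proof -
  obtain N where N: "\<forall>n\<ge>N. \<delta> + 1 \<le> K n"
    using K_lim unfolding filterlim_at_top eventually_sequentially by blast
  have "x \<in> G N" if x: "normG H gen nH K x \<le> \<delta>" for x
  proof -
    have "nH (hpart H gen x) \<ge> 0" using nonneg hpart_in_H by blast
    then have "qnorm H gen K (x - hpart H gen x) \<le> \<delta>" using x unfolding normG_eq by linarith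
    then have "x - hpart H gen x \<in> G N"
      using N by (intro qnorm_le_imp_in_G[of N \<delta>]) auto
    moreover have "hpart H gen x \<in> G N" using hpart_in_H H_subset_G by blast
    ultimately show "x \<in> G N" by (metis diff_add_cancel is_subgroup_add is_subgroup_G)
  qed
  then show ?thesis by (rule that)
qed

end

lemma finite_digit_sum_pairs:
  "finite {((\<Sum>i\<in>{1..N}. zmul (d i) (u i)), (\<Sum>i\<in>{1..N}. zmul (d i) (v i))) | d.
     \<forall>i\<in>{1..N}. \<bar>d i\<bar> \<le> (b :: nat \<Rightarrow> int) i}"
  (is "finite (?S N)")
proof (induct N)
  case 0
  then show ?case by (rule finite_subset[of _ "{(0, 0)}"]) auto
next
  case (Suc N)
  let ?step = "\<lambda>((c, c'), j). (c + zmul j (u (Suc N)), c' + zmul j (v (Suc N)))"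
  have "?S (Suc N) \<subseteq> ?step ` (?S N \<times> {- b (Suc N)..b (Suc N)})"
  proof
    fix p assume "p \<in> ?S (Suc N)"
    then obtain d where d: "\<forall>i\<in>{1..Suc N}. \<bar>d i\<bar> \<le> b i"
      "p = ((\<Sum>i\<in>{1..Suc N}. zmul (d i) (u i)), (\<Sum>i\<in>{1..Suc N}. zmul (d i) (v i)))" by blast
    have "((\<Sum>i\<in>{1..N}. zmul (d i) (u i)), (\<Sum>i\<in>{1..N}. zmul (d i) (v i))) \<in> ?S N"
      using d(1) by force
    moreover have "d (Suc N) \<in> {- b (Suc N)..b (Suc N)}" using d(1) by force
    ultimately show "p \<in> ?step ` (?S N \<times> {- b (Suc N)..b (Suc N)})"
      using d(2) by (auto intro!: image_eqI[where x = "(_, d (Suc N))"])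
  qed
  then show ?case using Suc by (meson finite_SigmaI finite_atLeastAtMost_int finite_imageI finite_subset)
qed

lemma group_iso_on_in: "group_iso_on r H H' \<Longrightarrow> x \<in> H \<Longrightarrow> r x \<in> H'"
  unfolding group_iso_on_def by (meson bij_betwE)

lemma group_iso_on_zero:
  assumes "is_subgroup H" "group_iso_on r H H'"
  shows "r 0 = 0"
  using assms is_subgroup_zero[OF assms(1)] unfolding group_iso_on_def
  by (metis add.right_neutral add_left_cancel)

lemma group_iso_on_diff:
  assumes "is_subgroup H" "group_iso_on r H H'" "x \<in> H" "y \<in> H"
  shows "r (x - y) = r x - r y"
proof -
  have "r ((x - y) + y) = r (x - y) + r y"
    using assms is_subgroup_diff[OF assms(1)] unfolding group_iso_on_def by blast
  then show ?thesis by (simp add: algebra_simps)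
qed

lemma group_iso_on_inv_into:
  assumes "is_subgroup H" "group_iso_on r H H'"
  shows "group_iso_on (inv_into H r) H' H"
proof -
  have bij: "bij_betw r H H'" using assms(2) by (simp add: group_iso_on_def)
  have "inv_into H r (a + b) = inv_into H r a + inv_into H r b" if "a \<in> H'" "b \<in> H'" for a b
  proof -
    let ?a = "inv_into H r a" and ?b = "inv_into H r b"
    have "?a \<in> H" "?b \<in> H" using that bij by (metis bij_betw_imp_surj_on inv_into_into)+
    moreover have "r (?a + ?b) = a + b"
      using assms(2) calculation that bij unfolding group_iso_on_def by (simp add: bij_betw_inv_into_right)
    ultimately show ?thesis using bij is_subgroup_add[OF assms(1)] by (metis bij_betw_inv_into_left)
  qed
  then show ?thesis using bij_betw_inv_into[OF bij] by (simp add: group_iso_on_def)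
qed

lemma proper_norm_on_nonneg:
  assumes "is_subgroup H" "proper_norm_on H n" "x \<in> H"
  shows "n x \<ge> 0"
proof -
  have "n (x + - x) \<le> n x + n (- x)"
    using assms is_subgroup_uminus[OF assms(1)] unfolding proper_norm_on_def by blast
  moreover have "n (x + - x) = 0" "n (- x) = n x"
    using assms is_subgroup_zero[OF assms(1)] unfolding proper_norm_on_def by auto
  ultimately show ?thesis by simp
qed

lemma proper_norm_on_transfer:
  assumes H: "is_subgroup H" and iso: "group_iso_on r H H'" and n: "proper_norm_on H n"
    and n': "\<forall>x\<in>H. n' (r x) = n x"
  shows "proper_norm_on H' n'"
proof -
  have bij: "bij_betw r H H'" using iso by (simp add: group_iso_on_def)
  have all_H': "(\<forall>y\<in>H'. P y) \<longleftrightarrow> (\<forall>x\<in>H. P (r x))" for P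
    using bij by (metis bij_betw_imp_surj_on image_eqI imageE)
  have "n' (r x) = 0 \<longleftrightarrow> r x = 0" if "x \<in> H" for x
    using that n n' group_iso_on_zero[OF H iso] bij is_subgroup_zero[OF H]
    unfolding proper_norm_on_def bij_betw_def by (metis inj_onD)
  moreover have "n' (- r x) = n' (r x)" if "x \<in> H" for x
  proof -
    have "- r x = r (- x)"
      using group_iso_on_diff[OF H iso, of 0 x] group_iso_on_zero[OF H iso] is_subgroup_zero[OF H] that
      by simp
    then show ?thesis using that n n' is_subgroup_uminus[OF H] unfolding proper_norm_on_def by simp
  qed
  moreover have "n' (r x + r y) \<le> n' (r x) + n' (r y)" if "x \<in> H" "y \<in> H" for x y
    using that n n' iso is_subgroup_add[OF H] unfolding proper_norm_on_def group_iso_on_def by metis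
  moreover have "finite {y \<in> H'. n' y \<le> R}" for R
  proof -
    have "{y \<in> H'. n' y \<le> R} = r ` {x \<in> H. n x \<le> R}"
      using bij n' by (auto simp: bij_betw_def)
    then show ?thesis using n unfolding proper_norm_on_def by simp
  qed
  ultimately show ?thesis unfolding proper_norm_on_def all_H' by simp
qed

lemma coarse_equivalence_bij:
  assumes "bij f" "coarse_map d d' f" "coarse_map d' d (inv f)"
    and "\<forall>x. d x x \<le> C" "\<forall>y. d' y y \<le> C'"
  shows "coarse_equivalence d d' f"
proof -
  have "inv f (f x) = x" "f (inv f y) = y" for x y
    using assms(1) by (simp_all add: bij_is_inj bij_is_surj surj_f_inv_f)
  then show ?thesis
    unfolding coarse_equivalence_def using assms(2-5) by (intro conjI exI[of _ "inv f"]) auto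
qed

subsection \<open>The digit-preserving bijection\<close>

definition transport :: "('g::ab_group_add \<Rightarrow> 'h::ab_group_add) \<Rightarrow> 'g set \<Rightarrow> (nat \<Rightarrow> 'g) \<Rightarrow> (nat \<Rightarrow> 'h) \<Rightarrow> 'g \<Rightarrow> 'h"
  where "transport r H gen gen' x =
    r (hpart H gen x) + (\<Sum>i\<in>{i. rpart H gen x i \<noteq> 0}. zmul (rpart H gen x i) (gen' i))"

locale chain_iso = A: odd_chain H gen + B: odd_chain H' gen'
  for H :: "'g::ab_group_add set" and gen and H' :: "'h::ab_group_add set" and gen' +
  fixes r :: "'g \<Rightarrow> 'h"
  assumes iso: "group_iso_on r H H'"
    and same_index: "\<forall>i\<ge>1. chain_index H gen i = chain_index H' gen' i"
begin

abbreviation F :: "'g \<Rightarrow> 'h" where "F \<equiv> transport r H gen gen'"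

lemma same_k: "i \<ge> 1 \<Longrightarrow> chain_k H' gen' i = chain_k H gen i"
  using same_index by (simp add: chain_k_def)

lemma hpart_transport: "hpart H' gen' (F x) = r (hpart H gen x)"
  and rpart_transport: "rpart H' gen' (F x) = rpart H gen x"
proof -
  have "rep_ok H' gen' (F x) (r (hpart H gen x)) (rpart H gen x)"
    unfolding rep_ok_def transport_def
    using A.rep_ok_parts[of x] A.hpart_in_H[of x] group_iso_on_in[OF iso] same_k
    by (auto simp: rep_ok_def)
  then show "hpart H' gen' (F x) = r (hpart H gen x)" "rpart H' gen' (F x) = rpart H gen x"
    unfolding B.rep_ok_iff by auto
qed

lemma transport_right_inverse: "F (transport (inv_into H r) H' gen' gen y) = y"
proof -
  let ?s = "inv_into H r" and ?h = "hpart H' gen' y" and ?\<rho> = "rpart H' gen' y"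
  have bij: "bij_betw r H H'" using iso by (simp add: group_iso_on_def)
  have "?s ?h \<in> H" using B.hpart_in_H bij by (metis bij_betw_imp_surj_on inv_into_into)
  then have "rep_ok H gen (transport ?s H' gen' gen y) (?s ?h) ?\<rho>"
    using B.rep_ok_parts[of y] same_k by (auto simp: rep_ok_def transport_def)
  then have "hpart H gen (transport ?s H' gen' gen y) = ?s ?h"
    and "rpart H gen (transport ?s H' gen' gen y) = ?\<rho>"
    unfolding A.rep_ok_iff by auto
  then show ?thesis
    using B.hpart_plus_digits[of y] B.hpart_in_H bij
    by (simp add: transport_def bij_betw_inv_into_right)
qed

lemma inj_transport: "inj F"
proof (rule injI)
  fix x y assume "F x = F y"
  then have "r (hpart H gen x) = r (hpart H gen y)" and r: "rpart H gen x = rpart H gen y"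
    by (simp_all only: hpart_transport[symmetric] rpart_transport[symmetric])
  then have "hpart H gen x = hpart H gen y"
    using iso A.hpart_in_H unfolding group_iso_on_def bij_betw_def by (metis inj_onD)
  then show "x = y" using r A.hpart_plus_digits[of x] A.hpart_plus_digits[of y] by simp
qed

lemma bij_transport: "bij F"
  unfolding bij_def using inj_transport surjI[of F, OF transport_right_inverse] by blast

lemma inv_transport: "inv F = transport (inv_into H r) H' gen' gen"
proof
  fix y
  show "inv F y = transport (inv_into H r) H' gen' gen y"
    using inv_f_f[OF inj_transport] transport_right_inverse by metis
qed

text \<open>\<open>F\<close> preserves digits, so \<open>y - x\<close> and \<open>F y - F x\<close> carry the same digit differences;
  these are bounded by \<open>2k\<^sub>i < m\<^sub>i\<close> and hence vanish above any level containing \<open>y - x\<close>.\<close>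

lemma transport_diff:
  assumes "y - x \<in> A.G N"
  obtains d where "\<forall>i\<in>{1..N}. \<bar>d i\<bar> \<le> 2 * chain_k H gen i"
    and "y - x = (hpart H gen y - hpart H gen x) + (\<Sum>i\<in>{1..N}. zmul (d i) (gen i))"
    and "F y - F x = r (hpart H gen y - hpart H gen x) + (\<Sum>i\<in>{1..N}. zmul (d i) (gen' i))"
proof -
  let ?hx = "hpart H gen x" and ?hy = "hpart H gen y" and ?rx = "rpart H gen x" and ?ry = "rpart H gen y"
  obtain P1 P2 where P1: "\<forall>i. ?rx i \<noteq> 0 \<longrightarrow> i \<in> {1..P1}" and P2: "\<forall>i. ?ry i \<noteq> 0 \<longrightarrow> i \<in> {1..P2}"
    using A.rpart_support_bounded by metis
  define P where "P = max (max P1 P2) N"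
  have P: "N \<le> P" and sx: "\<forall>i. ?rx i \<noteq> 0 \<longrightarrow> i \<in> {1..P}" and sy: "\<forall>i. ?ry i \<noteq> 0 \<longrightarrow> i \<in> {1..P}"
    using P1 P2 by (auto simp: P_def)
  define d where "d i = ?ry i - ?rx i" for i
  have hH: "?hy - ?hx \<in> H" using A.hpart_in_H is_subgroup_diff[OF A.subgroup_H] by blast
  have bd: "\<forall>i\<in>{1..P}. \<bar>d i\<bar> \<le> 2 * chain_k H gen i"
  proof
    fix i assume "i \<in> {1..P}"
    then have "\<bar>?rx i\<bar> \<le> chain_k H gen i" "\<bar>?ry i\<bar> \<le> chain_k H gen i" using A.rpart_bounded by auto
    then show "\<bar>d i\<bar> \<le> 2 * chain_k H gen i" unfolding d_def by linarith
  qed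
  have "y - x = (?hy + (\<Sum>i\<in>{1..P}. zmul (?ry i) (gen i))) - (?hx + (\<Sum>i\<in>{1..P}. zmul (?rx i) (gen i)))"
    using arg_cong2[OF A.hpart_plus_digits_upto[OF sy] A.hpart_plus_digits_upto[OF sx], of "(-)"] .
  also have "\<dots> = (?hy - ?hx) + (\<Sum>i\<in>{1..P}. zmul (d i) (gen i))"
    unfolding d_def by (rule diff_digit_sums)
  finally have diff: "y - x = (?hy - ?hx) + (\<Sum>i\<in>{1..P}. zmul (d i) (gen i))" .
  have vanish: "d i = 0" if "N < i" "i \<le> P" for i
    using A.digits_vanish_above[OF assms hH bd diff that] .
  have upto_N: "(\<Sum>i\<in>{1..P}. zmul (d i) (u i)) = (\<Sum>i\<in>{1..N}. zmul (d i) (u i))"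
    for u :: "nat \<Rightarrow> 'c::ab_group_add"
    by (rule sum.mono_neutral_right) (use P vanish in auto)
  have "F y - F x = (r ?hy + (\<Sum>i\<in>{1..P}. zmul (?ry i) (gen' i))) - (r ?hx + (\<Sum>i\<in>{1..P}. zmul (?rx i) (gen' i)))"
    unfolding transport_def sum_zmul_support[OF sx] sum_zmul_support[OF sy] ..
  also have "\<dots> = r (?hy - ?hx) + (\<Sum>i\<in>{1..P}. zmul (d i) (gen' i))"
    unfolding d_def diff_digit_sums
    using group_iso_on_diff[OF A.subgroup_H iso A.hpart_in_H A.hpart_in_H] by simp
  finally show ?thesis
    using that[of d] bd P diff unfolding upto_N by auto
qed

lemma normG_transport_le:
  assumes n: "proper_norm_on H nH" and n': "proper_norm_on H' nH'" and nr: "\<forall>z\<in>H. nH' (r z) = nH z"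
    and h: "h \<in> H" and z: "z = h + c" and w: "w = r h + c'" and c': "c' \<in> B.G N"
  shows "normG H' gen' nH' K' w
    \<le> nH (hpart H gen z) + nH (- hpart H gen c) + nH' (hpart H' gen' c') + (\<Sum>n\<le>N. \<bar>K' n\<bar>)"
proof -
  have rh: "r h \<in> H'" using group_iso_on_in[OF iso h] .
  have "h = hpart H gen z + - hpart H gen c" using A.hpart_add[OF h] z by simp
  then have "nH h \<le> nH (hpart H gen z) + nH (- hpart H gen c)"
    using n A.hpart_in_H is_subgroup_uminus[OF A.subgroup_H] unfolding proper_norm_on_def by metis
  moreover have "nH' (hpart H' gen' w) \<le> nH' (r h) + nH' (hpart H' gen' c')"
    using B.hpart_add[OF rh] n' rh B.hpart_in_H w unfolding proper_norm_on_def by metis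
  moreover have "w \<in> B.G N" using rh B.H_subset_G c' w is_subgroup_add[OF B.is_subgroup_G] by blast
  then have "w - hpart H' gen' w \<in> B.G N"
    using B.hpart_in_H B.H_subset_G is_subgroup_diff[OF B.is_subgroup_G] by blast
  then have "qnorm H' gen' K' (w - hpart H' gen' w) \<le> (\<Sum>n\<le>N. \<bar>K' n\<bar>)" by (rule B.qnorm_le_sum)
  ultimately show ?thesis unfolding B.normG_eq using nr h by simp
qed

lemma coarse_map_transport:
  assumes n: "proper_norm_on H nH" and n': "proper_norm_on H' nH'" and nr: "\<forall>z\<in>H. nH' (r z) = nH z"
    and K_pos: "\<forall>n\<ge>1. K n > 0" and K_lim: "filterlim K at_top sequentially"
  shows "coarse_map (distG H gen nH K) (distG H' gen' nH' K') F"
  unfolding coarse_map_def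
proof
  fix \<delta> :: real
  have nonneg: "\<forall>z\<in>H. nH z \<ge> 0" using proper_norm_on_nonneg[OF A.subgroup_H n] by blast
  obtain N where N: "\<And>z. normG H gen nH K z \<le> \<delta> \<Longrightarrow> z \<in> A.G N"
    using A.normG_ball_in_G[OF K_pos K_lim nonneg] by blast
  \<comment> \<open>the finitely many pairs of digit sums that can occur below level \<open>N\<close>\<close>
  define S where "S = {((\<Sum>i\<in>{1..N}. zmul (d i) (gen i)), (\<Sum>i\<in>{1..N}. zmul (d i) (gen' i))) | d.
     \<forall>i\<in>{1..N}. \<bar>d i\<bar> \<le> 2 * chain_k H gen i}"
  have "finite S" unfolding S_def by (rule finite_digit_sum_pairs)
  define C where "C = (\<Sum>p\<in>S. \<bar>nH (- hpart H gen (fst p))\<bar> + \<bar>nH' (hpart H' gen' (snd p))\<bar>)"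
  have "distG H' gen' nH' K' (F x) (F y) \<le> \<delta> + C + (\<Sum>n\<le>N. \<bar>K' n\<bar>)"
    if xy: "distG H gen nH K x y \<le> \<delta>" for x y
  proof -
    have "normG H gen nH K (y - x) \<le> \<delta>" using xy by (simp add: distG_def)
    then have hz: "nH (hpart H gen (y - x)) \<le> \<delta>"
      using A.qnorm_nonneg[OF K_pos, of "y - x - hpart H gen (y - x)"] unfolding A.normG_eq by linarith
    obtain d where bd: "\<forall>i\<in>{1..N}. \<bar>d i\<bar> \<le> 2 * chain_k H gen i"
      and z: "y - x = (hpart H gen y - hpart H gen x) + (\<Sum>i\<in>{1..N}. zmul (d i) (gen i))"
      and w: "F y - F x = r (hpart H gen y - hpart H gen x) + (\<Sum>i\<in>{1..N}. zmul (d i) (gen' i))"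
      using transport_diff N[OF \<open>normG H gen nH K (y - x) \<le> \<delta>\<close>] by blast
    let ?c = "\<Sum>i\<in>{1..N}. zmul (d i) (gen i)" and ?c' = "\<Sum>i\<in>{1..N}. zmul (d i) (gen' i)"
    have "(?c, ?c') \<in> S" unfolding S_def using bd by blast
    then have "\<bar>nH (- hpart H gen ?c)\<bar> + \<bar>nH' (hpart H' gen' ?c')\<bar> \<le> C"
      unfolding C_def using \<open>finite S\<close>
      by (metis (no_types, lifting) member_le_sum abs_ge_zero add_nonneg_nonneg fst_conv snd_conv)
    moreover have "normG H' gen' nH' K' (F y - F x)
      \<le> nH (hpart H gen (y - x)) + nH (- hpart H gen ?c) + nH' (hpart H' gen' ?c') + (\<Sum>n\<le>N. \<bar>K' n\<bar>)"
      using normG_transport_le[OF n n' nr _ z w B.sum_zmul_gen_in_G]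
        A.hpart_in_H is_subgroup_diff[OF A.subgroup_H] by blast
    ultimately show ?thesis using hz by (simp add: distG_def)
  qed
  then show "\<exists>\<epsilon>. \<forall>x y. distG H gen nH K x y \<le> \<delta> \<longrightarrow> distG H' gen' nH' K' (F x) (F y) \<le> \<epsilon>"
    by blast
qed

end

theorem mainTheorem15:
  fixes H :: "'g::{ab_group_add, countable} set" and H' :: "'h::{ab_group_add, countable} set"
    and r :: "'g \<Rightarrow> 'h"
    and nH :: "'g \<Rightarrow> real" and nH' :: "'h \<Rightarrow> real"
    and gen :: "nat \<Rightarrow> 'g" and gen' :: "nat \<Rightarrow> 'h"
    and K K' :: "nat \<Rightarrow> real"
  assumes "is_subgroup H" and "is_subgroup H'"
    and "quotient_odd_orders H" and "quotient_odd_orders H'"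
    and "group_iso_on r H H'"
    and "proper_norm_on H nH"
    and "\<forall>x\<in>H'. nH' x = nH (inv_into H r x)"
    and "one_step_chain H gen" and "one_step_chain H' gen'"
    and "\<forall>i\<ge>1. chain_index H gen i = chain_index H' gen' i"
    and "admissible H gen nH K" and "admissible H' gen' nH' K'"
  shows "\<exists>f. bij f \<and> coarse_equivalence (distG H gen nH K) (distG H' gen' nH' K') f"
proof -
  let ?s = "inv_into H r"
  have nH'_r: "\<forall>z\<in>H. nH' (r z) = nH z"
    using assms(5,7) group_iso_on_in by (metis bij_betw_inv_into_left group_iso_on_def)
  have proper': "proper_norm_on H' nH'" by (rule proper_norm_on_transfer[OF assms(1,5,6) nH'_r])
  interpret F: chain_iso H gen H' gen' r
    by unfold_locales (use assms in \<open>simp_all add: odd_chain_def\<close>)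
  interpret R: chain_iso H' gen' H gen ?s
    by unfold_locales (use assms group_iso_on_inv_into in \<open>simp_all add: odd_chain_def\<close>)
  have "coarse_map (distG H gen nH K) (distG H' gen' nH' K') F.F"
    using F.coarse_map_transport[OF assms(6) proper' nH'_r] assms(11) by (simp add: admissible_def)
  moreover have "coarse_map (distG H' gen' nH' K') (distG H gen nH K) (inv F.F)"
    using R.coarse_map_transport[OF proper' assms(6)] assms(7,12) F.inv_transport
    by (simp add: admissible_def)
  ultimately have "coarse_equivalence (distG H gen nH K) (distG H' gen' nH' K') F.F"
    by (rule coarse_equivalence_bij[OF F.bij_transport, where C = "normG H gen nH K 0"
          and C' = "normG H' gen' nH' K' 0"]) (simp_all add: distG_def)
  then show ?thesis using F.bij_transport by blast
qed

end
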